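(* Let $\Sigma$ be a signature, $T$ a monad on sets carrying a continuous $\Sigma$-algebra structure, and $\Gamma$ a relator for the monad $T$ that is inductive and respects $\Sigma$. Then applicative $\Gamma$-similarity $\precsim_\Gamma$ is a precongruence (i.e. its open extension $\precsim_\Gamma^\circ$ is a compatible preorder), and it is sound for the $\Gamma$-contextual preorder: $\precsim_\Gamma^\circ\subseteq\ \leq_\Gamma$.
   Context: An $\omega$CPPO is a poset with least element $\bot$ in which every $\omega$-chain has a lub; continuous = monotone and preserving such lubs. $T$ (unit $\eta$, bind $u\texttt{>>=}f$) carries a continuous $\Sigma$-algebra structure if each $TX$ is an $\omega$CPPO, bind is continuous in both arguments, and each $\sigma\in\Sigma$ of arity $k$ is interpreted by a continuous $\sigma^T:(TX)^k\to TX$. A relator $\Gamma$ for $T$ assigns to each $R\subseteq X\times Y$ a relation $\Gamma R\subseteq TX\times TY$ with: $=_{TX}\subseteq\Gamma(=_X)$; $\Gamma S\circ\Gamma R\subseteq\Gamma(S\circ R)$; $\Gamma((f\times g)^{-1}R)=(Tf\times Tg)^{-1}\Gamma R$ where $(f\times g)^{-1}R=\{(z,w)\mid f(z)\,R\,g(w)\}$; monotone in $R$; $x\,R\,y\Rightarrow\eta(x)\,\Gamma R\,\eta(y)$; and if $x\,R\,y\Rightarrow f(x)\,\Gamma S\,g(y)$ for all $x,y$ then $u\,\Gamma R\,v\Rightarrow(u\texttt{>>=}f)\,\Gamma S\,(v\texttt{>>=}g)$. Inductive: for every $R$, $\bot\,\Gamma R\,v$ for all $v$, and for every $\omega$-chain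 $(u_n)$, $(\forall n.\ u_n\,\Gamma R\,v)\Rightarrow\bigsqcup_n u_n\,\Gamma R\,v$. Respects $\Sigma$: $u_i\,\Gamma R\,v_i$ for all $i$ implies $\sigma^T(\vec u)\,\Gamma R\,\sigma^T(\vec v)$. Terms/values: $M,N::=\mathsf{return}\,V\mid VW\mid(M\ \mathsf{to}\ x.N)\mid\sigma(M_1,\dots,M_{\alpha(\sigma)})$, $V,W::=x\mid\lambda x.M$, modulo $\alpha$-equivalence; $M[V/x]$ substitution; $\mathcal{T}_0,\mathcal{V}_0$ closed terms/values; $\mathcal{T}(\bar x),\mathcal{V}(\bar x)$ those with free variables in $\bar x$. For closed $M$: $M^{(0)}=\bot$, $(\mathsf{return}\,V)^{(n+1)}=\eta(V)$, $((\lambda x.M)V)^{(n+1)}=(M[V/x])^{(n)}$, $(M\ \mathsf{to}\ x.N)^{(n+1)}=M^{(n)}\texttt{>>=}(V\mapsto(N[V/x])^{(n)})$, $(\sigma(\vec M))^{(n+1)}=\sigma^T(M_1^{(n)},\dots)$; this is an $\omega$-chain and $[\![M]\!]=\bigsqcup_nM^{(n)}$. A closed relation $R=(R_{\mathcal{T}}\subseteq\mathcal{T}_0\times\mathcal{T}_0,R_{\mathcal{V}}\subseteq\mathcal{V}_0\times\mathcal{V}_0)$ is an applicative $\Gamma$-simulation if $M\,R_{\mathcal{T}}\,N\Rightarrow[\![M]\!]\,\Gamma R_{\mathcal{V}}\,[\![N]\!]$ and $V\,R_{\mathcal{V}}\,W\Rightarrow VU\,R_{\mathcal{T}}\,WU$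 for every closed value $U$; $\precsim_\Gamma$ is the largest one. The open extension $R^\circ$ of a closed relation: $\bar x\vdash M\,R^\circ\,N$ iff $M,N\in\mathcal{T}(\bar x)$ and $M[\bar V/\bar x]\,R_{\mathcal{T}}\,N[\bar V/\bar x]$ for all closed values $\bar V$ substituted for $\bar x$ (similarly for values). A $\lambda$-term relation is a pair $R=(R_{\mathcal{T}},R_{\mathcal{V}})$ of sets of triples $(\bar x,M,N)$ with $M,N\in\mathcal{T}(\bar x)$, resp. $(\bar x,V,W)$ with $V,W\in\mathcal{V}(\bar x)$, written $\bar x\vdash M\,R\,N$. It is compatible if: $\bar x\vdash x\,R_{\mathcal{V}}\,x$ for $x\in\bar x$; $\bar x\cup\{x\}\vdash M\,R_{\mathcal{T}}\,N$ ($x\notin\bar x$) implies $\bar x\vdash\lambda x.M\,R_{\mathcal{V}}\,\lambda x.N$; $\bar x\vdash V\,R_{\mathcal{V}}\,W$ implies $\bar x\vdash\mathsf{return}\,V\,R_{\mathcal{T}}\,\mathsf{return}\,W$; $\bar x\vdash V\,R_{\mathcal{V}}\,V'$, $\bar x\vdash W\,R_{\mathcal{V}}\,W'$ imply $\bar x\vdash VW\,R_{\mathcal{T}}\,V'W'$; $\bar x\vdash M\,R_{\mathcal{T}}\,M'$, $\bar x\cup\{x\}\vdash N\,R_{\mathcal{T}}\,N'$ ($x\notin\bar x$) imply $\bar x\vdash(M\ \mathsf{to}\ x.N)\,R_{\mathcal{T}}\,(M'\ \mathsf{to}\ x.N')$; $\bar x\vdash M_i\,R_{\mathcal{T}}\,N_i$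 for all $i$ implies $\bar x\vdash\sigma(\vec M)\,R_{\mathcal{T}}\,\sigma(\vec N)$. A precongruence is a compatible preorder (reflexive and transitive for each $\bar x$). Let $\mathcal{U}=\mathcal{V}_0\times\mathcal{V}_0$; $R$ is $\Gamma$-preadequate if for closed $M,N$, $\emptyset\vdash M\,R_{\mathcal{T}}\,N$ implies $[\![M]\!]\,\Gamma\mathcal{U}\,[\![N]\!]$. The $\Gamma$-contextual preorder $\leq_\Gamma$ is the union of all compatible $\Gamma$-preadequate $\lambda$-term relations. *)

theory Defs
  imports Main
begin

text \<open>The context \<open>x\<close>-bar of the paper is represented by a natural number n
  (the variables are the indices 0 .. n-1); extending the context by a
  fresh variable x (as under lambda and in the body of "to") is \<open>Suc n\<close>,
  the new variable being index 0.  's is the type of operation symbols of Sigma.\<close>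

datatype 's trm = Ret "'s vl" | App "'s vl" "'s vl" | To "'s trm" "'s trm"
  | Op 's "'s trm list"
and 's vl = Var nat | Lam "'s trm"

fun wft :: "('s \<Rightarrow> nat) \<Rightarrow> nat \<Rightarrow> 's trm \<Rightarrow> bool"
and wfv :: "('s \<Rightarrow> nat) \<Rightarrow> nat \<Rightarrow> 's vl \<Rightarrow> bool" where
  "wft ar n (Ret V) = wfv ar n V"
| "wft ar n (App V W) = (wfv ar n V \<and> wfv ar n W)"
| "wft ar n (To M N) = (wft ar n M \<and> wft ar (Suc n) N)"
| "wft ar n (Op s Ms) = (length Ms = ar s \<and> (\<forall>M\<in>set Ms. wft ar n M))"
| "wfv ar n (Var i) = (i < n)"
| "wfv ar n (Lam M) = wft ar (Suc n) M"

definition cvals :: "('s \<Rightarrow> nat) \<Rightarrow> 's vl set" where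
  "cvals ar = {V. wfv ar 0 V}"

text \<open>Substitution of closed values: under k binders, the free index i \<ge> k is
  replaced by \<open>s (i - k)\<close>.  Since only closed values are ever substituted,
  no shifting is needed.\<close>

fun instt :: "nat \<Rightarrow> (nat \<Rightarrow> 's vl) \<Rightarrow> 's trm \<Rightarrow> 's trm"
and instv :: "nat \<Rightarrow> (nat \<Rightarrow> 's vl) \<Rightarrow> 's vl \<Rightarrow> 's vl" where
  "instt k s (Ret V) = Ret (instv k s V)"
| "instt k s (App V W) = App (instv k s V) (instv k s W)"
| "instt k s (To M N) = To (instt k s M) (instt (Suc k) s N)"
| "instt k s (Op f Ms) = Op f (map (instt k s) Ms)"
| "instv k s (Var i) = (if i < k then Var i else s (i - k))"
| "instv k s (Lam M) = Lam (instt (Suc k) s M)"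

definition subst1 :: "'s vl \<Rightarrow> 's trm \<Rightarrow> 's trm" where
  "subst1 V M = instt 0 (\<lambda>_. V) M"

definition substs :: "'s vl list \<Rightarrow> 's trm \<Rightarrow> 's trm" where
  "substs vs M = instt 0 (\<lambda>i. vs ! i) M"
definition substsv :: "'s vl list \<Rightarrow> 's vl \<Rightarrow> 's vl" where
  "substsv vs V = instv 0 (\<lambda>i. vs ! i) V"

definition is_lub :: "('t \<Rightarrow> 't \<Rightarrow> bool) \<Rightarrow> 't set \<Rightarrow> 't \<Rightarrow> bool" where
  "is_lub le A x \<longleftrightarrow> (\<forall>y\<in>A. le y x) \<and> (\<forall>z. (\<forall>y\<in>A. le y z) \<longrightarrow> le x z)"

definition lub :: "('t \<Rightarrow> 't \<Rightarrow> bool) \<Rightarrow> 't set \<Rightarrow> 't" where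
  "lub le A = (THE x. is_lub le A x)"

definition ochain :: "('t \<Rightarrow> 't \<Rightarrow> bool) \<Rightarrow> (nat \<Rightarrow> 't) \<Rightarrow> bool" where
  "ochain le c \<longleftrightarrow> (\<forall>n. le (c n) (c (Suc n)))"

definition omega_cppo :: "('t \<Rightarrow> 't \<Rightarrow> bool) \<Rightarrow> 't \<Rightarrow> bool" where
  "omega_cppo le b \<longleftrightarrow>
     (\<forall>x. le x x) \<and> (\<forall>x y. le x y \<longrightarrow> le y x \<longrightarrow> x = y)
   \<and> (\<forall>x y z. le x y \<longrightarrow> le y z \<longrightarrow> le x z)
   \<and> (\<forall>x. le b x)
   \<and> (\<forall>c. ochain le c \<longrightarrow> (\<exists>x. is_lub le (range c) x))"

definition ocont :: "('t \<Rightarrow> 't \<Rightarrow> bool) \<Rightarrow> ('t \<Rightarrow> 't) \<Rightarrow> bool" where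
  "ocont le h \<longleftrightarrow> (\<forall>x y. le x y \<longrightarrow> le (h x) (h y))
     \<and> (\<forall>c. ochain le c \<longrightarrow> is_lub le (range (h \<circ> c)) (h (lub le (range c))))"

text \<open>The carrier type 't plays the role of \<open>T \<V>\<^sub>0\<close>.  Only the data of T at the
  set of closed values is used: unit, Kleisli bind for maps from closed values,
  the omega-CPPO structure and the interpretation of the operations.\<close>

record ('s, 't) effstr =
  ar  :: "'s \<Rightarrow> nat"
  le  :: "'t \<Rightarrow> 't \<Rightarrow> bool"
  bt  :: 't
  eta :: "'s vl \<Rightarrow> 't"
  bnd :: "'t \<Rightarrow> ('s vl \<Rightarrow> 't) \<Rightarrow> 't"
  opr :: "'s \<Rightarrow> 't list \<Rightarrow> 't"

definition monad_laws :: "('s, 't) effstr \<Rightarrow> bool" where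
  "monad_laws E \<longleftrightarrow>
     (\<forall>u f g. (\<forall>x\<in>cvals (ar E). f x = g x) \<longrightarrow> bnd E u f = bnd E u g)
   \<and> (\<forall>x f. x \<in> cvals (ar E) \<longrightarrow> bnd E (eta E x) f = f x)
   \<and> (\<forall>u. bnd E u (eta E) = u)
   \<and> (\<forall>u f g. bnd E (bnd E u f) g = bnd E u (\<lambda>x. bnd E (f x) g))"

definition continuous_sigma_algebra :: "('s, 't) effstr \<Rightarrow> bool" where
  "continuous_sigma_algebra E \<longleftrightarrow>
     omega_cppo (le E) (bt E)
   \<comment> \<open>bind continuous in its first argument\<close>
   \<and> (\<forall>f. ocont (le E) (\<lambda>u. bnd E u f))
   \<comment> \<open>bind continuous in its second argument (pointwise order on maps from closed values)\<close>
   \<and> (\<forall>u f g. (\<forall>x\<in>cvals (ar E). le E (f x) (g x)) \<longrightarrow> le E (bnd E u f) (bnd E u g))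
   \<and> (\<forall>u c. (\<forall>n. \<forall>x\<in>cvals (ar E). le E (c n x) (c (Suc n) x)) \<longrightarrow>
        is_lub (le E) (range (\<lambda>n. bnd E u (c n)))
          (bnd E u (\<lambda>x. lub (le E) (range (\<lambda>n. c n x)))))
   \<comment> \<open>each operation of arity k is continuous on the product (T V0)^k\<close>
   \<and> (\<forall>s us vs. length us = ar E s \<longrightarrow> length vs = ar E s \<longrightarrow> list_all2 (le E) us vs \<longrightarrow>
        le E (opr E s us) (opr E s vs))
   \<and> (\<forall>s c. (\<forall>n. length (c n) = ar E s \<and> list_all2 (le E) (c n) (c (Suc n))) \<longrightarrow>
        is_lub (le E) (range (\<lambda>n. opr E s (c n)))
          (opr E s (map (\<lambda>i. lub (le E) (range (\<lambda>n. c n ! i))) [0..<ar E s])))"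

definition Tmap :: "('s, 't) effstr \<Rightarrow> ('s vl \<Rightarrow> 's vl) \<Rightarrow> 't \<Rightarrow> 't" where
  "Tmap E f u = bnd E u (eta E \<circ> f)"

definition relator :: "('s, 't) effstr \<Rightarrow> (('s vl \<times> 's vl) set \<Rightarrow> ('t \<times> 't) set) \<Rightarrow> bool" where
  "relator E \<Gamma> \<longleftrightarrow> (let V0 = cvals (ar E) in
     Id \<subseteq> \<Gamma> (Id_on V0)
   \<and> (\<forall>R S. R \<subseteq> V0 \<times> V0 \<longrightarrow> S \<subseteq> V0 \<times> V0 \<longrightarrow> \<Gamma> R O \<Gamma> S \<subseteq> \<Gamma> (R O S))
   \<and> (\<forall>f g R. f ` V0 \<subseteq> V0 \<longrightarrow> g ` V0 \<subseteq> V0 \<longrightarrow> R \<subseteq> V0 \<times> V0 \<longrightarrow>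
        \<Gamma> {(z, w). z \<in> V0 \<and> w \<in> V0 \<and> (f z, g w) \<in> R}
          = {(u, v). (Tmap E f u, Tmap E g v) \<in> \<Gamma> R})
   \<and> (\<forall>R S. R \<subseteq> S \<longrightarrow> S \<subseteq> V0 \<times> V0 \<longrightarrow> \<Gamma> R \<subseteq> \<Gamma> S)
   \<and> (\<forall>R x y. R \<subseteq> V0 \<times> V0 \<longrightarrow> (x, y) \<in> R \<longrightarrow> (eta E x, eta E y) \<in> \<Gamma> R)
   \<and> (\<forall>R S f g u v. R \<subseteq> V0 \<times> V0 \<longrightarrow> S \<subseteq> V0 \<times> V0 \<longrightarrow>
        (\<forall>x y. (x, y) \<in> R \<longrightarrow> (f x, g y) \<in> \<Gamma> S) \<longrightarrow>
        (u, v) \<in> \<Gamma> R \<longrightarrow> (bnd E u f, bnd E v g) \<in> \<Gamma> S))"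

definition inductive_relator :: "('s, 't) effstr \<Rightarrow> (('s vl \<times> 's vl) set \<Rightarrow> ('t \<times> 't) set) \<Rightarrow> bool" where
  "inductive_relator E \<Gamma> \<longleftrightarrow> (\<forall>R. R \<subseteq> cvals (ar E) \<times> cvals (ar E) \<longrightarrow>
     (\<forall>v. (bt E, v) \<in> \<Gamma> R)
   \<and> (\<forall>u v. ochain (le E) u \<longrightarrow> (\<forall>n. (u n, v) \<in> \<Gamma> R) \<longrightarrow> (lub (le E) (range u), v) \<in> \<Gamma> R))"

definition respects_sigma :: "('s, 't) effstr \<Rightarrow> (('s vl \<times> 's vl) set \<Rightarrow> ('t \<times> 't) set) \<Rightarrow> bool" where
  "respects_sigma E \<Gamma> \<longleftrightarrow> (\<forall>R s us vs. R \<subseteq> cvals (ar E) \<times> cvals (ar E) \<longrightarrow>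
     length us = ar E s \<longrightarrow> length vs = ar E s \<longrightarrow>
     list_all2 (\<lambda>u v. (u, v) \<in> \<Gamma> R) us vs \<longrightarrow> (opr E s us, opr E s vs) \<in> \<Gamma> R)"

primrec approx :: "('s, 't) effstr \<Rightarrow> nat \<Rightarrow> 's trm \<Rightarrow> 't" where
  "approx E 0 M = bt E"
| "approx E (Suc n) M = (case M of
      Ret V \<Rightarrow> eta E V
    | App V W \<Rightarrow> (case V of Lam M' \<Rightarrow> approx E n (subst1 W M') | Var _ \<Rightarrow> bt E)
    | To M1 N \<Rightarrow> bnd E (approx E n M1) (\<lambda>V. approx E n (subst1 V N))
    | Op s Ms \<Rightarrow> opr E s (map (approx E n) Ms))"

definition sem :: "('s, 't) effstr \<Rightarrow> 's trm \<Rightarrow> 't" where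
  "sem E M = lub (le E) (range (\<lambda>n. approx E n M))"

definition app_sim :: "('s, 't) effstr \<Rightarrow> (('s vl \<times> 's vl) set \<Rightarrow> ('t \<times> 't) set)
    \<Rightarrow> ('s trm \<times> 's trm) set \<Rightarrow> ('s vl \<times> 's vl) set \<Rightarrow> bool" where
  "app_sim E \<Gamma> RT RV \<longleftrightarrow>
     RT \<subseteq> {M. wft (ar E) 0 M} \<times> {M. wft (ar E) 0 M}
   \<and> RV \<subseteq> cvals (ar E) \<times> cvals (ar E)
   \<and> (\<forall>M N. (M, N) \<in> RT \<longrightarrow> (sem E M, sem E N) \<in> \<Gamma> RV)
   \<and> (\<forall>V W U. (V, W) \<in> RV \<longrightarrow> U \<in> cvals (ar E) \<longrightarrow> (App V U, App W U) \<in> RT)"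

definition simT :: "('s, 't) effstr \<Rightarrow> (('s vl \<times> 's vl) set \<Rightarrow> ('t \<times> 't) set) \<Rightarrow> ('s trm \<times> 's trm) set" where
  "simT E \<Gamma> = \<Union>{RT. \<exists>RV. app_sim E \<Gamma> RT RV}"
definition simV :: "('s, 't) effstr \<Rightarrow> (('s vl \<times> 's vl) set \<Rightarrow> ('t \<times> 't) set) \<Rightarrow> ('s vl \<times> 's vl) set" where
  "simV E \<Gamma> = \<Union>{RV. \<exists>RT. app_sim E \<Gamma> RT RV}"

definition openT :: "('s \<Rightarrow> nat) \<Rightarrow> ('s trm \<times> 's trm) set \<Rightarrow> (nat \<times> 's trm \<times> 's trm) set" where
  "openT a RT = {(n, M, N). wft a n M \<and> wft a n N \<and>
     (\<forall>vs. length vs = n \<longrightarrow> (\<forall>V\<in>set vs. V \<in> cvals a) \<longrightarrow> (substs vs M, substs vs N) \<in> RT)}"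

definition openV :: "('s \<Rightarrow> nat) \<Rightarrow> ('s vl \<times> 's vl) set \<Rightarrow> (nat \<times> 's vl \<times> 's vl) set" where
  "openV a RV = {(n, V, W). wfv a n V \<and> wfv a n W \<and>
     (\<forall>vs. length vs = n \<longrightarrow> (\<forall>U\<in>set vs. U \<in> cvals a) \<longrightarrow> (substsv vs V, substsv vs W) \<in> RV)}"

definition lam_rel :: "('s \<Rightarrow> nat) \<Rightarrow> (nat \<times> 's trm \<times> 's trm) set \<Rightarrow> (nat \<times> 's vl \<times> 's vl) set \<Rightarrow> bool" where
  "lam_rel a RT RV \<longleftrightarrow> (\<forall>(n, M, N)\<in>RT. wft a n M \<and> wft a n N) \<and> (\<forall>(n, V, W)\<in>RV. wfv a n V \<and> wfv a n W)"

definition compatible :: "('s \<Rightarrow> nat) \<Rightarrow> (nat \<times> 's trm \<times> 's trm) set \<Rightarrow> (nat \<times> 's vl \<times> 's vl) set \<Rightarrow> bool" where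
  "compatible a RT RV \<longleftrightarrow>
     (\<forall>n i. i < n \<longrightarrow> (n, Var i, Var i) \<in> RV)
   \<and> (\<forall>n M N. (Suc n, M, N) \<in> RT \<longrightarrow> (n, Lam M, Lam N) \<in> RV)
   \<and> (\<forall>n V W. (n, V, W) \<in> RV \<longrightarrow> (n, Ret V, Ret W) \<in> RT)
   \<and> (\<forall>n V V' W W'. (n, V, V') \<in> RV \<longrightarrow> (n, W, W') \<in> RV \<longrightarrow> (n, App V W, App V' W') \<in> RT)
   \<and> (\<forall>n M M' N N'. (n, M, M') \<in> RT \<longrightarrow> (Suc n, N, N') \<in> RT \<longrightarrow> (n, To M N, To M' N') \<in> RT)
   \<and> (\<forall>n s Ms Ns. length Ms = a s \<longrightarrow> length Ns = a s \<longrightarrow>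
        (\<forall>i < a s. (n, Ms ! i, Ns ! i) \<in> RT) \<longrightarrow> (n, Op s Ms, Op s Ns) \<in> RT)"

definition preorder_rel :: "('s \<Rightarrow> nat) \<Rightarrow> (nat \<times> 's trm \<times> 's trm) set \<Rightarrow> (nat \<times> 's vl \<times> 's vl) set \<Rightarrow> bool" where
  "preorder_rel a RT RV \<longleftrightarrow>
     (\<forall>n M. wft a n M \<longrightarrow> (n, M, M) \<in> RT)
   \<and> (\<forall>n V. wfv a n V \<longrightarrow> (n, V, V) \<in> RV)
   \<and> (\<forall>n M N P. (n, M, N) \<in> RT \<longrightarrow> (n, N, P) \<in> RT \<longrightarrow> (n, M, P) \<in> RT)
   \<and> (\<forall>n V W U. (n, V, W) \<in> RV \<longrightarrow> (n, W, U) \<in> RV \<longrightarrow> (n, V, U) \<in> RV)"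

definition preadequate :: "('s, 't) effstr \<Rightarrow> (('s vl \<times> 's vl) set \<Rightarrow> ('t \<times> 't) set)
    \<Rightarrow> (nat \<times> 's trm \<times> 's trm) set \<Rightarrow> bool" where
  "preadequate E \<Gamma> RT \<longleftrightarrow> (\<forall>M N. (0, M, N) \<in> RT \<longrightarrow>
     (sem E M, sem E N) \<in> \<Gamma> (cvals (ar E) \<times> cvals (ar E)))"

definition ctxT :: "('s, 't) effstr \<Rightarrow> (('s vl \<times> 's vl) set \<Rightarrow> ('t \<times> 't) set) \<Rightarrow> (nat \<times> 's trm \<times> 's trm) set" where
  "ctxT E \<Gamma> = \<Union>{RT. \<exists>RV. lam_rel (ar E) RT RV \<and> compatible (ar E) RT RV \<and> preadequate E \<Gamma> RT}"
definition ctxV :: "('s, 't) effstr \<Rightarrow> (('s vl \<times> 's vl) set \<Rightarrow> ('t \<times> 't) set) \<Rightarrow> (nat \<times> 's vl \<times> 's vl) set" where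
  "ctxV E \<Gamma> = \<Union>{RV. \<exists>RT. lam_rel (ar E) RT RV \<and> compatible (ar E) RT RV \<and> preadequate E \<Gamma> RT}"

end

theory Submission
  imports Defs
begin

text \<open>Howe's method.  Closed similarity is a preorder because the relator preserves
  identities and composition, and its open extension inherits this.  For compatibility
  one considers Howe's extension of open similarity: the least relation relating \<open>M\<close> to
  \<open>P\<close> whenever \<open>M\<close> and some \<open>N\<close> have the same outermost constructor and related
  components, and \<open>N\<close> is openly similar to \<open>P\<close>.  It is compatible, contains open
  similarity and is substitutive.  Its closed part is an applicative simulation, by induction
  on the approximation index of the semantics: inductivity of the relator handles \<open>\<bottom>\<close>
  and the lub, and substitutivity handles the beta-step.  Hence it is contained in
  similarity, so it coincides with open similarity, which is therefore compatible; and a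
  compatible relation contained in similarity is \<open>\<Gamma>\<close>-preadequate.\<close>

section \<open>Substitution of closed values\<close>

lemma wf_mono:
  "wft a m M \<Longrightarrow> m \<le> m' \<Longrightarrow> wft a m' M"
  "wfv a m V \<Longrightarrow> m \<le> m' \<Longrightarrow> wfv a m' V"
  by (induction M and V arbitrary: m m' and m m') auto

lemma inst_id_wf:
  "wft a m M \<Longrightarrow> m \<le> k \<Longrightarrow> instt k s M = M"
  "wfv a m V \<Longrightarrow> m \<le> k \<Longrightarrow> instv k s V = V"
  by (induction M and V arbitrary: m k and m k) (auto intro!: map_idI)

lemma inst_cong:
  "wft a m M \<Longrightarrow> (\<And>i. k \<le> i \<Longrightarrow> i < m \<Longrightarrow> s (i - k) = t (i - k)) \<Longrightarrow> instt k s M = instt k t M"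
  "wfv a m V \<Longrightarrow> (\<And>i. k \<le> i \<Longrightarrow> i < m \<Longrightarrow> s (i - k) = t (i - k)) \<Longrightarrow> instv k s V = instv k t V"
proof (induction M and V arbitrary: m k and m k)
  case (To M N)
  have "s (i - Suc k) = t (i - Suc k)" if "Suc k \<le> i" "i < Suc m" for i
    using that To.prems(2)[of "i - 1"] by (cases i) auto
  then show ?case using To by auto
next
  case (Lam M)
  have "s (i - Suc k) = t (i - Suc k)" if "Suc k \<le> i" "i < Suc m" for i
    using that Lam.prems(2)[of "i - 1"] by (cases i) auto
  then show ?case using Lam by auto
qed auto

lemma wf_inst:
  "wft a (k + n) M \<Longrightarrow> (\<And>i. i < n \<Longrightarrow> wfv a 0 (s i)) \<Longrightarrow> wft a k (instt k s M)"
  "wfv a (k + n) V \<Longrightarrow> (\<And>i. i < n \<Longrightarrow> wfv a 0 (s i)) \<Longrightarrow> wfv a k (instv k s V)"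
  by (induction M and V arbitrary: k and k) (auto intro: wf_mono(2)[of a 0])

lemma inst_inst:
  "(\<And>i. wfv a 0 (t i)) \<Longrightarrow>
     instt j u (instt (j + k) t M) = instt j (\<lambda>i. if i < k then u i else t (i - k)) M"
  "(\<And>i. wfv a 0 (t i)) \<Longrightarrow>
     instv j u (instv (j + k) t V) = instv j (\<lambda>i. if i < k then u i else t (i - k)) V"
proof (induction M and V arbitrary: j and j)
  case (To M N)
  then show ?case using To.IH(2)[of "Suc j"] by simp
next
  case (Lam M)
  then show ?case using Lam.IH[of "Suc j"] by simp
next
  case (Var i)
  then show ?case using inst_id_wf(2)[of a 0 "t (i - (j + k))" j u] by (auto simp: diff_diff_add)
qed auto

lemma wf_subst1: "V \<in> cvals a \<Longrightarrow> wft a (Suc 0) N \<Longrightarrow> wft a 0 (subst1 V N)"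
  unfolding subst1_def cvals_def using wf_inst(1)[of a 0 1 N "\<lambda>_. V"] by auto

lemma wf_substs: "wft a (length vs) M \<Longrightarrow> \<forall>V\<in>set vs. V \<in> cvals a \<Longrightarrow> wft a 0 (substs vs M)"
  unfolding substs_def cvals_def using wf_inst(1)[of a 0 "length vs" M "\<lambda>i. vs ! i"] by auto

lemma wf_substsv: "wfv a (length vs) V \<Longrightarrow> \<forall>U\<in>set vs. U \<in> cvals a \<Longrightarrow> wfv a 0 (substsv vs V)"
  unfolding substsv_def cvals_def using wf_inst(2)[of a 0 "length vs" V "\<lambda>i. vs ! i"] by auto

lemma substs_take: "wft a n M \<Longrightarrow> n \<le> length vs \<Longrightarrow> substs vs M = substs (take n vs) M"
  unfolding substs_def by (rule inst_cong(1)) auto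

lemma substsv_take: "wfv a n V \<Longrightarrow> n \<le> length vs \<Longrightarrow> substsv vs V = substsv (take n vs) V"
  unfolding substsv_def by (rule inst_cong(2)) auto

lemma substs_instt:
  assumes "\<forall>i. t i \<in> cvals a" and "length vs = k" and "wft a (k + n) M"
  shows "substs vs (instt k t M) = substs (vs @ map t [0..<n]) M"
proof -
  have "substs vs (instt k t M) = instt 0 (\<lambda>i. if i < k then vs ! i else t (i - k)) M"
    unfolding substs_def using assms(1) inst_inst(1)[of a t 0 "\<lambda>i. vs ! i" k M]
    by (simp add: cvals_def)
  also have "\<dots> = substs (vs @ map t [0..<n]) M"
    unfolding substs_def by (rule inst_cong(1)[OF assms(3)]) (use assms(2) in \<open>auto simp: nth_append\<close>)
  finally show ?thesis .
qed

lemma substsv_instv: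
  assumes "\<forall>i. t i \<in> cvals a" and "length vs = k" and "wfv a (k + n) V"
  shows "substsv vs (instv k t V) = substsv (vs @ map t [0..<n]) V"
proof -
  have "substsv vs (instv k t V) = instv 0 (\<lambda>i. if i < k then vs ! i else t (i - k)) V"
    unfolding substsv_def using assms(1) inst_inst(2)[of a t 0 "\<lambda>i. vs ! i" k V]
    by (simp add: cvals_def)
  also have "\<dots> = substsv (vs @ map t [0..<n]) V"
    unfolding substsv_def by (rule inst_cong(2)[OF assms(3)]) (use assms(2) in \<open>auto simp: nth_append\<close>)
  finally show ?thesis .
qed

lemma openT_0: "(0, M, N) \<in> openT a R \<longleftrightarrow> wft a 0 M \<and> wft a 0 N \<and> (M, N) \<in> R"
  unfolding openT_def substs_def by (auto simp: inst_id_wf(1))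

lemma openV_0: "(0, V, W) \<in> openV a R \<longleftrightarrow> wfv a 0 V \<and> wfv a 0 W \<and> (V, W) \<in> R"
  unfolding openV_def substsv_def by (auto simp: inst_id_wf(2))

lemma openT_refl: "(\<And>M. wft a 0 M \<Longrightarrow> (M, M) \<in> R) \<Longrightarrow> wft a n M \<Longrightarrow> (n, M, M) \<in> openT a R"
  unfolding openT_def by (auto intro: wf_substs)

lemma openV_refl: "(\<And>V. wfv a 0 V \<Longrightarrow> (V, V) \<in> R) \<Longrightarrow> wfv a n V \<Longrightarrow> (n, V, V) \<in> openV a R"
  unfolding openV_def by (auto intro: wf_substsv)

lemma openT_trans:
  "trans R \<Longrightarrow> (n, M, N) \<in> openT a R \<Longrightarrow> (n, N, P) \<in> openT a R \<Longrightarrow> (n, M, P) \<in> openT a R"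
  unfolding openT_def trans_def by blast

lemma openV_trans:
  "trans R \<Longrightarrow> (n, V, W) \<in> openV a R \<Longrightarrow> (n, W, U) \<in> openV a R \<Longrightarrow> (n, V, U) \<in> openV a R"
  unfolding openV_def trans_def by blast

lemma openT_weaken:
  assumes "(n, M, N) \<in> openT a R" and "n \<le> m"
  shows "(m, M, N) \<in> openT a R"
  unfolding openT_def
proof (intro CollectI case_prodI conjI allI impI)
  show "wft a m M" "wft a m N" using assms wf_mono(1) unfolding openT_def by blast+
  fix vs :: "'a vl list" assume "length vs = m" "\<forall>V\<in>set vs. V \<in> cvals a"
  then have "length (take n vs) = n" "\<forall>U\<in>set (take n vs). U \<in> cvals a"
    using assms(2) by (auto dest: in_set_takeD)
  then have "(substs (take n vs) M, substs (take n vs) N) \<in> R"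
    using assms(1) unfolding openT_def by blast
  then show "(substs vs M, substs vs N) \<in> R"
    using assms \<open>length vs = m\<close> substs_take[of a n M vs] substs_take[of a n N vs]
    unfolding openT_def by auto
qed

lemma openV_weaken:
  assumes "(n, V, W) \<in> openV a R" and "n \<le> m"
  shows "(m, V, W) \<in> openV a R"
  unfolding openV_def
proof (intro CollectI case_prodI conjI allI impI)
  show "wfv a m V" "wfv a m W" using assms wf_mono(2) unfolding openV_def by blast+
  fix vs :: "'a vl list" assume "length vs = m" "\<forall>U\<in>set vs. U \<in> cvals a"
  then have "length (take n vs) = n" "\<forall>U\<in>set (take n vs). U \<in> cvals a"
    using assms(2) by (auto dest: in_set_takeD)
  then have "(substsv (take n vs) V, substsv (take n vs) W) \<in> R"
    using assms(1) unfolding openV_def by blast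
  then show "(substsv vs V, substsv vs W) \<in> R"
    using assms \<open>length vs = m\<close> substsv_take[of a n V vs] substsv_take[of a n W vs]
    unfolding openV_def by auto
qed

lemma openT_inst:
  assumes "(k + n, M, N) \<in> openT a R" and "\<forall>i. t i \<in> cvals a"
  shows "(k, instt k t M, instt k t N) \<in> openT a R"
  unfolding openT_def
proof (intro CollectI case_prodI conjI allI impI)
  show "wft a k (instt k t M)" "wft a k (instt k t N)"
    using assms wf_inst(1)[of a k n] unfolding openT_def cvals_def by auto
  fix vs :: "'a vl list" assume "length vs = k" "\<forall>V\<in>set vs. V \<in> cvals a"
  then have "length (vs @ map t [0..<n]) = k + n" "\<forall>V\<in>set (vs @ map t [0..<n]). V \<in> cvals a"
    using assms(2) by auto
  then show "(substs vs (instt k t M), substs vs (instt k t N)) \<in> R"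
    using assms \<open>length vs = k\<close> unfolding openT_def by (auto simp: substs_instt)
qed

lemma openV_inst:
  assumes "(k + n, V, W) \<in> openV a R" and "\<forall>i. t i \<in> cvals a"
  shows "(k, instv k t V, instv k t W) \<in> openV a R"
  unfolding openV_def
proof (intro CollectI case_prodI conjI allI impI)
  show "wfv a k (instv k t V)" "wfv a k (instv k t W)"
    using assms wf_inst(2)[of a k n] unfolding openV_def cvals_def by auto
  fix vs :: "'a vl list" assume "length vs = k" "\<forall>U\<in>set vs. U \<in> cvals a"
  then have "length (vs @ map t [0..<n]) = k + n" "\<forall>U\<in>set (vs @ map t [0..<n]). U \<in> cvals a"
    using assms(2) by auto
  then show "(substsv vs (instv k t V), substsv vs (instv k t W)) \<in> R"
    using assms \<open>length vs = k\<close> unfolding openV_def by (auto simp: substsv_instv)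
qed

locale cppo =
  fixes le :: "'t \<Rightarrow> 't \<Rightarrow> bool" and bt :: 't
  assumes omega_cppo: "omega_cppo le bt"
begin

lemma le_refl: "le x x"
  and le_trans: "le x y \<Longrightarrow> le y z \<Longrightarrow> le x z"
  and le_antisym: "le x y \<Longrightarrow> le y x \<Longrightarrow> x = y"
  and bot_least: "le bt x"
  using omega_cppo unfolding omega_cppo_def by blast+

lemma lub_eqI: "is_lub le A x \<Longrightarrow> lub le A = x"
  unfolding lub_def by (rule the_equality) (auto simp: is_lub_def intro: le_antisym)

lemma is_lub_lub: "ochain le c \<Longrightarrow> is_lub le (range c) (lub le (range c))"
  using omega_cppo lub_eqI unfolding omega_cppo_def by metis

lemma ochain_mono:
  assumes "ochain le c" and "n \<le> m"
  shows "le (c n) (c m)"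
  using assms(2)
  by (induction rule: dec_induct) (use assms(1) in \<open>auto simp: ochain_def intro: le_refl le_trans\<close>)

lemma lub_Suc: "c 0 = bt \<Longrightarrow> lub le (range c) = lub le (range (\<lambda>n. c (Suc n)))"
proof -
  assume "c 0 = bt"
  then have "(\<forall>y\<in>range c. le y z) \<longleftrightarrow> (\<forall>y\<in>range (\<lambda>n. c (Suc n)). le y z)" for z
    using bot_least by (auto, metis not0_implies_Suc)
  then show ?thesis unfolding lub_def is_lub_def by simp
qed

lemma is_lub_diagonal:
  fixes d :: "nat \<Rightarrow> nat \<Rightarrow> 't"
  assumes mono: "\<And>n n' m m'. n \<le> n' \<Longrightarrow> m \<le> m' \<Longrightarrow> le (d n m) (d n' m')"
    and col: "\<And>m. is_lub le (range (\<lambda>n. d n m)) (x m)"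
    and row: "is_lub le (range x) y"
  shows "is_lub le (range (\<lambda>n. d n n)) y"
  unfolding is_lub_def
proof safe
  fix n
  show "le (d n n) y" using col[of n] row unfolding is_lub_def by (blast intro: le_trans)
next
  fix z assume ub: "\<forall>w\<in>range (\<lambda>n. d n n). le w z"
  have "le (d n m) z" for n m
  proof -
    have "le (d n m) (d (max n m) (max n m))" by (rule mono) auto
    then show ?thesis using ub le_trans by blast
  qed
  then have "le (x m) z" for m using col[of m] unfolding is_lub_def by blast
  then show "le y z" using row unfolding is_lub_def by blast
qed

end

locale cont_sigma_algebra =
  fixes E :: "('s, 't) effstr"
  assumes cont: "continuous_sigma_algebra E"
begin

sublocale cppo "le E" "bt E"
  using cont unfolding continuous_sigma_algebra_def cppo_def by blast

lemma bnd_mono1: "le E u v \<Longrightarrow> le E (bnd E u f) (bnd E v f)"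
  and bnd_cont1: "ochain (le E) c \<Longrightarrow>
    is_lub (le E) (range (\<lambda>n. bnd E (c n) f)) (bnd E (lub (le E) (range c)) f)"
  and bnd_mono2: "(\<And>x. x \<in> cvals (ar E) \<Longrightarrow> le E (f x) (g x)) \<Longrightarrow> le E (bnd E u f) (bnd E u g)"
  and bnd_cont2: "(\<And>n x. x \<in> cvals (ar E) \<Longrightarrow> le E (h n x) (h (Suc n) x)) \<Longrightarrow>
    is_lub (le E) (range (\<lambda>n. bnd E u (h n))) (bnd E u (\<lambda>x. lub (le E) (range (\<lambda>n. h n x))))"
  and opr_mono: "length us = ar E s \<Longrightarrow> length vs = ar E s \<Longrightarrow> list_all2 (le E) us vs \<Longrightarrow>
    le E (opr E s us) (opr E s vs)"
  and opr_cont: "(\<And>n. length (us' n) = ar E s \<and> list_all2 (le E) (us' n) (us' (Suc n))) \<Longrightarrow>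
    is_lub (le E) (range (\<lambda>n. opr E s (us' n)))
      (opr E s (map (\<lambda>i. lub (le E) (range (\<lambda>n. us' n ! i))) [0..<ar E s]))"
  using cont unfolding continuous_sigma_algebra_def ocont_def by (simp_all add: comp_def)

lemma approx_Suc_mono: "wft (ar E) 0 M \<Longrightarrow> le E (approx E n M) (approx E (Suc n) M)"
proof (induction n arbitrary: M)
  case 0
  then show ?case by (simp add: bot_least)
next
  case (Suc n)
  show ?case
  proof (cases M)
    case (App V W)
    then show ?thesis using Suc by (cases V) (auto simp: le_refl wf_subst1 cvals_def)
  next
    case (To M1 N1)
    then show ?thesis using Suc
      by (auto simp: wf_subst1 intro!: le_trans[OF bnd_mono1 bnd_mono2])
  next
    case (Op s Ms)
    then show ?thesis using Suc
      by (auto intro!: opr_mono simp: list_all2_map1 list_all2_map2 list_all2_same)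
  qed (simp add: le_refl)
qed

lemma approx_chain: "wft (ar E) 0 M \<Longrightarrow> ochain (le E) (\<lambda>n. approx E n M)"
  unfolding ochain_def using approx_Suc_mono by blast

lemma sem_approx_Suc: "sem E M = lub (le E) (range (\<lambda>n. approx E (Suc n) M))"
  unfolding sem_def by (rule lub_Suc) simp

lemma sem_Ret: "sem E (Ret V) = eta E V"
  unfolding sem_approx_Suc by (rule lub_eqI) (auto simp: is_lub_def le_refl)

lemma sem_App_Lam: "sem E (App (Lam M) U) = sem E (subst1 U M)"
  unfolding sem_approx_Suc[of "App (Lam M) U"] by (simp add: sem_def)

lemma sem_To:
  assumes "wft (ar E) 0 M" and "wft (ar E) (Suc 0) N"
  shows "sem E (To M N) = bnd E (sem E M) (\<lambda>V. sem E (subst1 V N))"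
proof -
  have "is_lub (le E) (range (\<lambda>n. bnd E (approx E n M) (\<lambda>V. approx E n (subst1 V N))))
          (bnd E (sem E M) (\<lambda>V. sem E (subst1 V N)))"
  proof (rule is_lub_diagonal[where d = "\<lambda>n m. bnd E (approx E n M) (\<lambda>V. approx E m (subst1 V N))"
        and x = "\<lambda>m. bnd E (sem E M) (\<lambda>V. approx E m (subst1 V N))"])
    show "le E (bnd E (approx E n M) (\<lambda>V. approx E m (subst1 V N)))
            (bnd E (approx E n' M) (\<lambda>V. approx E m' (subst1 V N)))"
      if "n \<le> n'" "m \<le> m'" for n n' m m'
      using that assms wf_subst1
      by (intro le_trans[OF bnd_mono1 bnd_mono2] ochain_mono[OF approx_chain]) auto
    show "is_lub (le E) (range (\<lambda>n. bnd E (approx E n M) (\<lambda>V. approx E m (subst1 V N))))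
            (bnd E (sem E M) (\<lambda>V. approx E m (subst1 V N)))" for m
      unfolding sem_def by (rule bnd_cont1[OF approx_chain[OF assms(1)]])
    show "is_lub (le E) (range (\<lambda>m. bnd E (sem E M) (\<lambda>V. approx E m (subst1 V N))))
            (bnd E (sem E M) (\<lambda>V. sem E (subst1 V N)))"
      unfolding sem_def by (rule bnd_cont2) (use approx_Suc_mono wf_subst1 assms(2) in blast)
  qed
  then show ?thesis unfolding sem_approx_Suc by (simp add: lub_eqI)
qed

lemma sem_Op:
  assumes "length Ms = ar E s" and "\<forall>M\<in>set Ms. wft (ar E) 0 M"
  shows "sem E (Op s Ms) = opr E s (map (sem E) Ms)"
proof -
  have "is_lub (le E) (range (\<lambda>n. opr E s (map (approx E n) Ms)))
          (opr E s (map (\<lambda>i. lub (le E) (range (\<lambda>n. map (approx E n) Ms ! i))) [0..<ar E s]))"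
    using assms approx_Suc_mono
    by (intro opr_cont) (auto simp: list_all2_map1 list_all2_map2 list_all2_same)
  moreover have "map (\<lambda>i. lub (le E) (range (\<lambda>n. map (approx E n) Ms ! i))) [0..<ar E s] = map (sem E) Ms"
    using assms(1) by (auto simp: sem_def intro!: nth_equalityI)
  ultimately show ?thesis unfolding sem_approx_Suc by (simp add: lub_eqI)
qed

end

section \<open>Applicative similarity\<close>

locale similarity =
  fixes E :: "('s, 't) effstr" and \<Gamma> :: "('s vl \<times> 's vl) set \<Rightarrow> ('t \<times> 't) set"
  assumes relator: "relator E \<Gamma>"
begin

abbreviation V0 :: "'s vl set" where "V0 \<equiv> cvals (ar E)"

lemmas relator_clauses = relator[unfolded relator_def Let_def]

lemma rel_Id_on: "(u, u) \<in> \<Gamma> (Id_on V0)"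
  using relator_clauses[THEN conjunct1] by blast

lemma rel_relcomp:
  "R \<subseteq> V0 \<times> V0 \<Longrightarrow> S \<subseteq> V0 \<times> V0 \<Longrightarrow> (u, v) \<in> \<Gamma> R \<Longrightarrow> (v, w) \<in> \<Gamma> S \<Longrightarrow> (u, w) \<in> \<Gamma> (R O S)"
  using relator_clauses[THEN conjunct2, THEN conjunct1] by blast

lemma rel_mono: "R \<subseteq> S \<Longrightarrow> S \<subseteq> V0 \<times> V0 \<Longrightarrow> (u, v) \<in> \<Gamma> R \<Longrightarrow> (u, v) \<in> \<Gamma> S"
  using relator_clauses[THEN conjunct2, THEN conjunct2, THEN conjunct2, THEN conjunct1] by blast

lemma rel_eta: "R \<subseteq> V0 \<times> V0 \<Longrightarrow> (x, y) \<in> R \<Longrightarrow> (eta E x, eta E y) \<in> \<Gamma> R"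
  using relator_clauses[THEN conjunct2, THEN conjunct2, THEN conjunct2, THEN conjunct2, THEN conjunct1]
  by blast

lemma rel_bnd:
  assumes "R \<subseteq> V0 \<times> V0" and "S \<subseteq> V0 \<times> V0"
    and "\<And>x y. (x, y) \<in> R \<Longrightarrow> (f x, g y) \<in> \<Gamma> S" and "(u, v) \<in> \<Gamma> R"
  shows "(bnd E u f, bnd E v g) \<in> \<Gamma> S"
  using relator_clauses[THEN conjunct2, THEN conjunct2, THEN conjunct2, THEN conjunct2, THEN conjunct2]
    assms
  by blast

lemma app_sim_subset: "app_sim E \<Gamma> RT RV \<Longrightarrow> RT \<subseteq> simT E \<Gamma> \<and> RV \<subseteq> simV E \<Gamma>"
  unfolding simT_def simV_def by blast

lemma simT_closed: "simT E \<Gamma> \<subseteq> {M. wft (ar E) 0 M} \<times> {M. wft (ar E) 0 M}"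
  and simV_closed: "simV E \<Gamma> \<subseteq> V0 \<times> V0"
  unfolding simT_def simV_def app_sim_def by blast+

lemma simT_sem:
  assumes "(M, N) \<in> simT E \<Gamma>"
  shows "(sem E M, sem E N) \<in> \<Gamma> (simV E \<Gamma>)"
proof -
  obtain RT RV where sim: "app_sim E \<Gamma> RT RV" and "(M, N) \<in> RT"
    using assms unfolding simT_def by blast
  then have "(sem E M, sem E N) \<in> \<Gamma> RV" unfolding app_sim_def by blast
  then show ?thesis using rel_mono[OF _ simV_closed] app_sim_subset[OF sim] by blast
qed

lemma simV_App:
  assumes "(V, W) \<in> simV E \<Gamma>" and "U \<in> V0"
  shows "(App V U, App W U) \<in> simT E \<Gamma>"
proof -
  obtain RT RV where sim: "app_sim E \<Gamma> RT RV" and "(V, W) \<in> RV"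
    using assms unfolding simV_def by blast
  then have "(App V U, App W U) \<in> RT" using assms(2) unfolding app_sim_def by blast
  then show ?thesis using app_sim_subset[OF sim] by blast
qed

lemma app_sim_Id: "app_sim E \<Gamma> {(M, M) | M. wft (ar E) 0 M} (Id_on V0)"
  unfolding app_sim_def using rel_Id_on by (auto simp: cvals_def)

lemma simT_refl: "wft (ar E) 0 M \<Longrightarrow> (M, M) \<in> simT E \<Gamma>"
  and simV_refl: "wfv (ar E) 0 V \<Longrightarrow> (V, V) \<in> simV E \<Gamma>"
  using app_sim_subset[OF app_sim_Id] by (auto simp: cvals_def)

lemma app_sim_relcomp: "app_sim E \<Gamma> (simT E \<Gamma> O simT E \<Gamma>) (simV E \<Gamma> O simV E \<Gamma>)"
  unfolding app_sim_def
proof (intro conjI allI impI)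
  show "simT E \<Gamma> O simT E \<Gamma> \<subseteq> {M. wft (ar E) 0 M} \<times> {M. wft (ar E) 0 M}"
    using simT_closed by blast
  show "simV E \<Gamma> O simV E \<Gamma> \<subseteq> V0 \<times> V0"
    using simV_closed by blast
  show "(sem E M, sem E N) \<in> \<Gamma> (simV E \<Gamma> O simV E \<Gamma>)" if "(M, N) \<in> simT E \<Gamma> O simT E \<Gamma>" for M N
    using that rel_relcomp[OF simV_closed simV_closed] simT_sem by blast
  show "(App V U, App W U) \<in> simT E \<Gamma> O simT E \<Gamma>" if "(V, W) \<in> simV E \<Gamma> O simV E \<Gamma>" "U \<in> V0"
    for V W U
    using that simV_App by blast
qed

lemma trans_simT: "trans (simT E \<Gamma>)"
  and trans_simV: "trans (simV E \<Gamma>)"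
  using app_sim_subset[OF app_sim_relcomp] by (auto intro: transI)

abbreviation osimT :: "(nat \<times> 's trm \<times> 's trm) set" where "osimT \<equiv> openT (ar E) (simT E \<Gamma>)"
abbreviation osimV :: "(nat \<times> 's vl \<times> 's vl) set" where "osimV \<equiv> openV (ar E) (simV E \<Gamma>)"

lemma preorder_osim: "preorder_rel (ar E) osimT osimV"
  unfolding preorder_rel_def
  using openT_refl[OF simT_refl] openV_refl[OF simV_refl]
    openT_trans[OF trans_simT] openV_trans[OF trans_simV]
  by blast

section \<open>Howe's extension of open similarity\<close>

inductive howeT :: "nat \<Rightarrow> 's trm \<Rightarrow> 's trm \<Rightarrow> bool"
  and howeV :: "nat \<Rightarrow> 's vl \<Rightarrow> 's vl \<Rightarrow> bool" where
  howe_Var: "i < n \<Longrightarrow> (n, Var i, W) \<in> osimV \<Longrightarrow> howeV n (Var i) W"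
| howe_Lam: "howeT (Suc n) M M' \<Longrightarrow> (n, Lam M', W) \<in> osimV \<Longrightarrow> howeV n (Lam M) W"
| howe_Ret: "howeV n V V' \<Longrightarrow> (n, Ret V', N) \<in> osimT \<Longrightarrow> howeT n (Ret V) N"
| howe_App: "howeV n V V' \<Longrightarrow> howeV n W W' \<Longrightarrow> (n, App V' W', N) \<in> osimT \<Longrightarrow>
    howeT n (App V W) N"
| howe_To: "howeT n M M' \<Longrightarrow> howeT (Suc n) N N' \<Longrightarrow> (n, To M' N', P) \<in> osimT \<Longrightarrow>
    howeT n (To M N) P"
| howe_Op: "length Ms = ar E s \<Longrightarrow> length Ns = ar E s \<Longrightarrow> (\<forall>i<ar E s. howeT n (Ms ! i) (Ns ! i)) \<Longrightarrow>
    (n, Op s Ns, P) \<in> osimT \<Longrightarrow> howeT n (Op s Ms) P"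

lemma howe_wf:
  "howeT n M N \<Longrightarrow> wft (ar E) n M \<and> wft (ar E) n N"
  "howeV n V W \<Longrightarrow> wfv (ar E) n V \<and> wfv (ar E) n W"
proof (induction rule: howeT_howeV.inducts)
  case (howe_Op Ms s Ns n P)
  then show ?case by (auto simp: openT_def in_set_conv_nth)
qed (auto simp: openT_def openV_def)

lemma howe_osim_trans:
  "howeT n M N \<Longrightarrow> (n, N, P) \<in> osimT \<Longrightarrow> howeT n M P"
  "howeV n V W \<Longrightarrow> (n, W, U) \<in> osimV \<Longrightarrow> howeV n V U"
proof -
  note transT = openT_trans[OF trans_simT] and transV = openV_trans[OF trans_simV]
  show "howeT n M N \<Longrightarrow> (n, N, P) \<in> osimT \<Longrightarrow> howeT n M P"
    by (erule howeT.cases) (metis howe_Ret transT, metis howe_App transT,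
        metis howe_To transT, metis howe_Op transT)
  show "howeV n V W \<Longrightarrow> (n, W, U) \<in> osimV \<Longrightarrow> howeV n V U"
    by (erule howeV.cases) (metis howe_Var transV, metis howe_Lam transV)
qed

lemma howe_refl:
  "wft (ar E) n M \<Longrightarrow> howeT n M M"
  "wfv (ar E) n V \<Longrightarrow> howeV n V V"
proof (induction M and V arbitrary: n and n)
  case (Ret V)
  then show ?case by (intro howe_Ret[of n V V] openT_refl[OF simT_refl]) auto
next
  case (App V W)
  then show ?case by (intro howe_App[of n V V W W] openT_refl[OF simT_refl]) auto
next
  case (To M N)
  then show ?case by (intro howe_To[of n M M N N] openT_refl[OF simT_refl]) auto
next
  case (Op s Ms)
  then show ?case by (intro howe_Op[of Ms s Ms] openT_refl[OF simT_refl]) auto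
next
  case (Var i)
  then show ?case by (intro howe_Var openV_refl[OF simV_refl]) auto
next
  case (Lam M)
  then show ?case by (intro howe_Lam[of n M M] openV_refl[OF simV_refl]) auto
qed

lemma osim_howe:
  "(n, M, N) \<in> osimT \<Longrightarrow> howeT n M N"
  "(n, V, W) \<in> osimV \<Longrightarrow> howeV n V W"
proof -
  show "(n, M, N) \<in> osimT \<Longrightarrow> howeT n M N"
    by (rule howe_osim_trans(1)[OF howe_refl(1)]) (simp_all add: openT_def)
  show "(n, V, W) \<in> osimV \<Longrightarrow> howeV n V W"
    by (rule howe_osim_trans(2)[OF howe_refl(2)]) (simp_all add: openV_def)
qed

lemma howe_weaken:
  "howeT n M N \<Longrightarrow> n \<le> m \<Longrightarrow> howeT m M N"
  "howeV n V W \<Longrightarrow> n \<le> m \<Longrightarrow> howeV m V W"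
proof (induction arbitrary: m and m rule: howeT_howeV.inducts)
  case (howe_Var i n W)
  then show ?case by (intro howeT_howeV.howe_Var) (auto intro: openV_weaken)
next
  case (howe_Lam n M M' W)
  then show ?case by (intro howeT_howeV.howe_Lam[of m M M']) (auto intro: openV_weaken)
next
  case (howe_Ret n V V' N)
  then show ?case by (intro howeT_howeV.howe_Ret[of m V V']) (auto intro: openT_weaken)
next
  case (howe_App n V V' W W' N)
  then show ?case by (intro howeT_howeV.howe_App[of m V V' W W']) (auto intro: openT_weaken)
next
  case (howe_To n M M' N N' P)
  then show ?case by (intro howeT_howeV.howe_To[of m M M' N N']) (auto intro: openT_weaken)
next
  case (howe_Op Ms s Ns n P)
  then show ?case by (intro howeT_howeV.howe_Op[of Ms s Ns m]) (auto intro: openT_weaken)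
qed

lemma howe_inst:
  "howeT m M M' \<Longrightarrow> m = k + n \<Longrightarrow> (\<forall>j<n. howeV 0 (s j) (t j)) \<Longrightarrow> (\<forall>j. t j \<in> V0) \<Longrightarrow>
     howeT k (instt k s M) (instt k t M')"
  "howeV m V V' \<Longrightarrow> m = k + n \<Longrightarrow> (\<forall>j<n. howeV 0 (s j) (t j)) \<Longrightarrow> (\<forall>j. t j \<in> V0) \<Longrightarrow>
     howeV k (instv k s V) (instv k t V')"
proof (induction arbitrary: k and k rule: howeT_howeV.inducts)
  case (howe_Var i m W)
  have osim: "(k, instv k t (Var i), instv k t W) \<in> osimV"
    using openV_inst howe_Var by blast
  show ?case
  proof (cases "i < k")
    case True
    then show ?thesis using osim by (auto intro: howeT_howeV.howe_Var)
  next
    case False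
    then have "i - k < n" using howe_Var by auto
    then have "howeV k (s (i - k)) (t (i - k))"
      using howe_Var.prems(2) howe_weaken(2) by blast
    then show ?thesis using osim False howe_osim_trans(2) by auto
  qed
next
  case (howe_Lam m M M' W)
  then show ?case
    using openV_inst[of k n "Lam M'" W] by (auto intro: howeT_howeV.howe_Lam)
next
  case (howe_Ret m V V' N)
  then show ?case
    using openT_inst[of k n "Ret V'" N] by (auto intro: howeT_howeV.howe_Ret)
next
  case (howe_App m V V' W W' N)
  then show ?case
    using openT_inst[of k n "App V' W'" N] by (auto intro: howeT_howeV.howe_App)
next
  case (howe_To m M M' N N' P)
  then show ?case
    using openT_inst[of k n "To M' N'" P] by (auto intro: howeT_howeV.howe_To)
next
  case (howe_Op Ms f Ns m P)
  then show ?case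
    using openT_inst[of k n "Op f Ns" P]
    by (auto intro!: howeT_howeV.howe_Op[of "map (instt k s) Ms" f "map (instt k t) Ns"])
qed

lemma compatible_howe: "compatible (ar E) {(n, M, N). howeT n M N} {(n, V, W). howeV n V W}"
  unfolding compatible_def
proof (simp, intro conjI allI impI)
  note reflT = openT_refl[OF simT_refl] and reflV = openV_refl[OF simV_refl]
  show "howeV n (Var i) (Var i)" if "i < n" for n i
    using that by (simp add: howe_refl)
  show "howeV n (Lam M) (Lam N)" if "howeT (Suc n) M N" for n M N
    using that howe_wf by (intro howe_Lam[OF that] reflV) auto
  show "howeT n (Ret V) (Ret W)" if "howeV n V W" for n V W
    using that howe_wf by (intro howe_Ret[OF that] reflT) auto
  show "howeT n (App V W) (App V' W')" if "howeV n V V'" "howeV n W W'" for n V V' W W'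
    using that howe_wf by (intro howe_App[OF that] reflT) auto
  show "howeT n (To M N) (To M' N')" if "howeT n M M'" "howeT (Suc n) N N'" for n M M' N N'
    using that howe_wf by (intro howe_To[OF that] reflT) auto
  show "howeT n (Op s Ms) (Op s Ns)"
    if "length Ms = ar E s" "length Ns = ar E s" "\<forall>i<ar E s. howeT n (Ms ! i) (Ns ! i)" for n s Ms Ns
  proof (intro howe_Op[OF that] reflT)
    have "\<forall>N\<in>set Ns. wft (ar E) n N" using that by (metis in_set_conv_nth howe_wf(1))
    then show "wft (ar E) n (Op s Ns)" using that by simp
  qed
qed

end

locale howe = similarity E \<Gamma> + cont_sigma_algebra E
  for E :: "('s, 't) effstr" and \<Gamma> :: "('s vl \<times> 's vl) set \<Rightarrow> ('t \<times> 't) set" +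
  assumes inductive_relator: "inductive_relator E \<Gamma>"
    and respects_sigma: "respects_sigma E \<Gamma>"
begin

lemma rel_bot: "R \<subseteq> V0 \<times> V0 \<Longrightarrow> (bt E, v) \<in> \<Gamma> R"
  and rel_lub: "R \<subseteq> V0 \<times> V0 \<Longrightarrow> ochain (le E) u \<Longrightarrow> (\<And>n. (u n, v) \<in> \<Gamma> R) \<Longrightarrow>
    (lub (le E) (range u), v) \<in> \<Gamma> R"
  using inductive_relator unfolding inductive_relator_def by blast+

lemma rel_opr: "R \<subseteq> V0 \<times> V0 \<Longrightarrow> length us = ar E s \<Longrightarrow> length vs = ar E s \<Longrightarrow>
    list_all2 (\<lambda>u v. (u, v) \<in> \<Gamma> R) us vs \<Longrightarrow> (opr E s us, opr E s vs) \<in> \<Gamma> R"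
  using respects_sigma unfolding respects_sigma_def by blast

abbreviation howe0 :: "('s vl \<times> 's vl) set" where "howe0 \<equiv> {(V, W). howeV 0 V W}"

lemma howe0_closed: "howe0 \<subseteq> V0 \<times> V0"
  using howe_wf(2) by (auto simp: cvals_def)

lemma howe0_relcomp_simV: "howe0 O simV E \<Gamma> \<subseteq> howe0"
proof clarify
  fix V X W assume howe: "howeV 0 V X" and sim: "(X, W) \<in> simV E \<Gamma>"
  have "(0, X, W) \<in> osimV"
    using sim simV_closed by (auto simp: openV_0 cvals_def)
  then show "howeV 0 V W" by (rule howe_osim_trans(2)[OF howe])
qed

lemma rel_howe0_simT:
  assumes "(u, sem E P) \<in> \<Gamma> howe0" and "(P, N) \<in> simT E \<Gamma>"
  shows "(u, sem E N) \<in> \<Gamma> howe0"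
  using rel_relcomp[OF howe0_closed simV_closed assms(1) simT_sem[OF assms(2)]]
  by (rule rel_mono[OF howe0_relcomp_simV howe0_closed])

lemma rel_howe0_osimT:
  assumes "(u, sem E P) \<in> \<Gamma> howe0" and "(0, P, N) \<in> osimT"
  shows "(u, sem E N) \<in> \<Gamma> howe0"
  using assms by (simp add: openT_0 rel_howe0_simT)

lemma howe_subst1:
  assumes "howeT (Suc 0) M M'" and "howeV 0 V V'"
  shows "howeT 0 (subst1 V M) (subst1 V' M')"
proof -
  have "V' \<in> V0" using assms(2) howe_wf(2) by (simp add: cvals_def)
  then show ?thesis
    unfolding subst1_def using howe_inst(1)[OF assms(1), of 0 1 "\<lambda>_. V" "\<lambda>_. V'"] assms(2) by simp
qed

lemma howe_Lam_inv:
  assumes "howeV 0 (Lam M) W"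
  obtains M' where "howeT (Suc 0) M M'" and "(Lam M', W) \<in> simV E \<Gamma>"
proof -
  from assms obtain M' where "howeT (Suc 0) M M'" and "(0, Lam M', W) \<in> osimV"
    by (cases rule: howeV.cases) blast
  then show ?thesis using that by (simp add: openV_0)
qed

lemma howe_approx_App:
  assumes IH: "\<And>M N. howeT 0 M N \<Longrightarrow> (approx E n M, sem E N) \<in> \<Gamma> howe0"
    and V: "howeV 0 V V'" and W: "howeV 0 W W'"
  shows "(approx E (Suc n) (App V W), sem E (App V' W')) \<in> \<Gamma> howe0"
proof (cases V)
  case (Var x)
  then show ?thesis by (simp add: rel_bot[OF howe0_closed])
next
  case (Lam M)
  obtain M' where M: "howeT (Suc 0) M M'" and sim: "(Lam M', V') \<in> simV E \<Gamma>"
    using V Lam howe_Lam_inv by blast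
  have "(approx E (Suc n) (App V W), sem E (App (Lam M') W')) \<in> \<Gamma> howe0"
    using Lam IH[OF howe_subst1[OF M W]] by (simp add: sem_App_Lam)
  moreover have "W' \<in> V0" using W howe_wf(2) by (simp add: cvals_def)
  then have "(App (Lam M') W', App V' W') \<in> simT E \<Gamma>" by (rule simV_App[OF sim])
  ultimately show ?thesis by (rule rel_howe0_simT)
qed

lemma howe_approx: "howeT 0 M N \<Longrightarrow> (approx E n M, sem E N) \<in> \<Gamma> howe0"
proof (induction n arbitrary: M N)
  case 0
  then show ?case by (simp add: rel_bot[OF howe0_closed])
next
  case (Suc n)
  from Suc.prems show ?case
  proof (cases rule: howeT.cases)
    case (howe_Ret V V')
    then have "(approx E (Suc n) M, sem E (Ret V')) \<in> \<Gamma> howe0"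
      by (auto simp: sem_Ret intro: rel_eta[OF howe0_closed])
    then show ?thesis using howe_Ret(3) by (rule rel_howe0_osimT)
  next
    case (howe_App V V' W W')
    then have "(approx E (Suc n) M, sem E (App V' W')) \<in> \<Gamma> howe0"
      using howe_approx_App[OF Suc.IH] by blast
    then show ?thesis using howe_App(4) by (rule rel_howe0_osimT)
  next
    case (howe_To M1 M1' N1 N1')
    have "(bnd E (approx E n M1) (\<lambda>V. approx E n (subst1 V N1)),
           bnd E (sem E M1') (\<lambda>V. sem E (subst1 V N1'))) \<in> \<Gamma> howe0"
      using howe_To Suc.IH howe_subst1 by (intro rel_bnd[OF howe0_closed howe0_closed]) auto
    moreover have "sem E (To M1' N1') = bnd E (sem E M1') (\<lambda>V. sem E (subst1 V N1'))"
      using howe_To howe_wf(1) by (intro sem_To) auto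
    ultimately have "(approx E (Suc n) M, sem E (To M1' N1')) \<in> \<Gamma> howe0"
      using howe_To by simp
    then show ?thesis using howe_To(4) by (rule rel_howe0_osimT)
  next
    case (howe_Op Ms s Ns)
    have "\<forall>N\<in>set Ns. wft (ar E) 0 N" using howe_Op by (metis in_set_conv_nth howe_wf(1))
    then have "sem E (Op s Ns) = opr E s (map (sem E) Ns)" using howe_Op by (intro sem_Op) auto
    moreover have "(opr E s (map (approx E n) Ms), opr E s (map (sem E) Ns)) \<in> \<Gamma> howe0"
      using howe_Op Suc.IH by (intro rel_opr[OF howe0_closed]) (auto simp: list_all2_conv_all_nth)
    ultimately have "(approx E (Suc n) M, sem E (Op s Ns)) \<in> \<Gamma> howe0"
      using howe_Op by simp
    then show ?thesis using howe_Op(5) by (rule rel_howe0_osimT)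
  qed
qed

lemma howe_sem:
  assumes "howeT 0 M N"
  shows "(sem E M, sem E N) \<in> \<Gamma> howe0"
  unfolding sem_def[of E M]
  using assms howe_wf(1) howe_approx by (intro rel_lub[OF howe0_closed approx_chain]) auto

lemma app_sim_howe: "app_sim E \<Gamma> {(M, N). howeT 0 M N} howe0"
  unfolding app_sim_def
proof (intro conjI allI impI)
  show "{(M, N). howeT 0 M N} \<subseteq> {M. wft (ar E) 0 M} \<times> {M. wft (ar E) 0 M}"
    using howe_wf(1) by auto
  show "howe0 \<subseteq> V0 \<times> V0" by (rule howe0_closed)
  show "(sem E M, sem E N) \<in> \<Gamma> howe0" if "(M, N) \<in> {(M, N). howeT 0 M N}" for M N
    using that howe_sem by blast
  show "(App V U, App W U) \<in> {(M, N). howeT 0 M N}" if "(V, W) \<in> howe0" "U \<in> V0" for V W U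
    using that compatible_howe howe_refl(2) by (auto simp: compatible_def cvals_def)
qed

lemma howe_closing_subst:
  assumes "length vs = n" and "\<forall>V\<in>set vs. V \<in> V0"
  shows "howeT n M N \<Longrightarrow> (substs vs M, substs vs N) \<in> simT E \<Gamma>"
    and "howeV n V W \<Longrightarrow> (substsv vs V, substsv vs W) \<in> simV E \<Gamma>"
proof -
  \<comment> \<open>the padding value is irrelevant: \<open>howe_inst\<close> needs \<open>\<sigma>\<close> closed everywhere\<close>
  define \<sigma> where "\<sigma> i = (if i < length vs then vs ! i else Lam (Ret (Var 0)))" for i
  have \<sigma>_closed: "\<forall>i. \<sigma> i \<in> V0" and \<sigma>_howe: "\<forall>i<n. howeV 0 (\<sigma> i) (\<sigma> i)"
    using assms by (auto simp: \<sigma>_def cvals_def intro: howe_refl(2))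
  note sim = app_sim_subset[OF app_sim_howe]
  show "(substs vs M, substs vs N) \<in> simT E \<Gamma>" if howe: "howeT n M N"
  proof -
    have "substs vs P = instt 0 \<sigma> P" if "wft (ar E) n P" for P
      unfolding substs_def using that assms(1) by (intro inst_cong(1)) (auto simp: \<sigma>_def)
    moreover have "howeT 0 (instt 0 \<sigma> M) (instt 0 \<sigma> N)"
      using howe_inst(1)[OF howe, of 0 n \<sigma> \<sigma>] \<sigma>_closed \<sigma>_howe by simp
    ultimately show ?thesis using howe_wf(1)[OF howe] sim by auto
  qed
  show "(substsv vs V, substsv vs W) \<in> simV E \<Gamma>" if howe: "howeV n V W"
  proof -
    have "substsv vs U = instv 0 \<sigma> U" if "wfv (ar E) n U" for U
      unfolding substsv_def using that assms(1) by (intro inst_cong(2)) (auto simp: \<sigma>_def)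
    moreover have "howeV 0 (instv 0 \<sigma> V) (instv 0 \<sigma> W)"
      using howe_inst(2)[OF howe, of 0 n \<sigma> \<sigma>] \<sigma>_closed \<sigma>_howe by simp
    ultimately show ?thesis using howe_wf(2)[OF howe] sim by auto
  qed
qed

lemma howe_subset_osim:
  "howeT n M N \<Longrightarrow> (n, M, N) \<in> osimT"
  "howeV n V W \<Longrightarrow> (n, V, W) \<in> osimV"
  unfolding openT_def openV_def by (auto dest: howe_wf intro: howe_closing_subst)

lemma osimT_eq_howeT: "osimT = {(n, M, N). howeT n M N}"
  and osimV_eq_howeV: "osimV = {(n, V, W). howeV n V W}"
  using osim_howe howe_subset_osim by auto

lemma compatible_osim: "compatible (ar E) osimT osimV"
  unfolding osimT_eq_howeT osimV_eq_howeV by (rule compatible_howe)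

lemma preadequate_osim: "preadequate E \<Gamma> osimT"
  unfolding preadequate_def openT_0
  using simT_sem rel_mono[OF simV_closed] by blast

lemma osim_subset_ctx: "osimT \<subseteq> ctxT E \<Gamma>" "osimV \<subseteq> ctxV E \<Gamma>"
proof -
  have "lam_rel (ar E) osimT osimV"
    by (auto simp: lam_rel_def openT_def openV_def)
  then show "osimT \<subseteq> ctxT E \<Gamma>" "osimV \<subseteq> ctxV E \<Gamma>"
    unfolding ctxT_def ctxV_def using compatible_osim preadequate_osim by (auto intro!: Union_upper)
qed

end

theorem mainTheorem10:
  fixes E :: "('s, 't) effstr" and \<Gamma> :: "('s vl \<times> 's vl) set \<Rightarrow> ('t \<times> 't) set"
  assumes "monad_laws E"
    and "continuous_sigma_algebra E"
    and "relator E \<Gamma>"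
    and "inductive_relator E \<Gamma>"
    and "respects_sigma E \<Gamma>"
  shows "compatible (ar E) (openT (ar E) (simT E \<Gamma>)) (openV (ar E) (simV E \<Gamma>))
       \<and> preorder_rel (ar E) (openT (ar E) (simT E \<Gamma>)) (openV (ar E) (simV E \<Gamma>))
       \<and> openT (ar E) (simT E \<Gamma>) \<subseteq> ctxT E \<Gamma>
       \<and> openV (ar E) (simV E \<Gamma>) \<subseteq> ctxV E \<Gamma>"
proof -
  interpret howe E \<Gamma>
    using assms(2-5) by (simp add: howe_def similarity_def cont_sigma_algebra_def howe_axioms_def)
  show ?thesis
    by (intro conjI compatible_osim preorder_osim osim_subset_ctx)
qed

end
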